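(* Let $n\in\{3,4,5,\dots\}\cup\{\infty\}$ and let $\Omega_n$ be the regular polygon state space. There exists a function $S:\Omega_n\to\mathbb R$ such that $S(\sigma)=0$ for every pure state $\sigma$ of $\Omega_n$ and such that $$S\Big(\sum_{i=1}^lp_i\omega_i\Big)=\sum_{i=1}^lp_iS(\omega_i)-\sum_{i=1}^lp_i\log p_i$$ for every finite perfectly distinguishable family $\{\omega_1,\dots,\omega_l\}\subset\Omega_n$ and every probability vector $(p_1,\dots,p_l)$ (with $0\log0=0$), if and only if $n=3$ or $n=\infty$.
   Context: For finite $n\ge3$, $\Omega_n\subset\mathbb R^3$ is the convex hull of the points $\omega_i^n=(r_n\cos\frac{2\pi i}{n},\,r_n\sin\frac{2\pi i}{n},\,1)$, $i=0,\dots,n-1$, where $r_n=\sqrt{1/\cos(\pi/n)}$; $\Omega_\infty=\{(x,y,1):x^2+y^2\le1\}$. Pure states are the extreme points of $\Omega_n$. Effects are the linear functionals $e$ on $\mathbb R^3$ with $0\le e(\omega)\le1$ for all $\omega\in\Omega_n$ (no-restriction), and the unit effect $u$ is the one with $u\equiv1$ on $\Omega_n$. A family $\{\omega_1,\dots,\omega_l\}$ of states is perfectly distinguishable if there exist effects $e_1,\dots,e_l$ with $\sum_ie_i=u$ and $e_i(\omega_j)=\delta_{ij}$. *)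

theory Defs
  imports "HOL-Analysis.Analysis" "HOL-Library.Extended_Nat"
begin

definition polygon_radius :: "nat \<Rightarrow> real" where
  "polygon_radius m = sqrt (1 / cos (pi / real m))"

definition polygon_vertex :: "nat \<Rightarrow> nat \<Rightarrow> real^3" where
  "polygon_vertex m i =
     vector [polygon_radius m * cos (2 * pi * real i / real m),
             polygon_radius m * sin (2 * pi * real i / real m), 1]"

definition Omega :: "enat \<Rightarrow> (real^3) set" where
  "Omega n = (case n of
      enat m \<Rightarrow> convex hull {polygon_vertex m i | i. i < m}
    | \<infinity> \<Rightarrow> {v. v $ 3 = 1 \<and> (v $ 1)\<^sup>2 + (v $ 2)\<^sup>2 \<le> 1})"

definition pure_states :: "enat \<Rightarrow> (real^3) set" where
  "pure_states n = {x. x extreme_point_of Omega n}"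

text \<open>Effects: linear functionals on R^3, represented by a vector a via \<open>\<omega> \<mapsto> a \<bullet> \<omega>\<close>
  (no-restriction hypothesis).\<close>

definition is_effect :: "enat \<Rightarrow> real^3 \<Rightarrow> bool" where
  "is_effect n a \<longleftrightarrow> (\<forall>\<omega>\<in>Omega n. 0 \<le> a \<bullet> \<omega> \<and> a \<bullet> \<omega> \<le> 1)"

definition unit_effect :: "enat \<Rightarrow> real^3" where
  "unit_effect n = (THE u. is_effect n u \<and> (\<forall>\<omega>\<in>Omega n. u \<bullet> \<omega> = 1))"

definition perfectly_distinguishable :: "enat \<Rightarrow> nat \<Rightarrow> (nat \<Rightarrow> real^3) \<Rightarrow> bool" where
  "perfectly_distinguishable n l \<omega> \<longleftrightarrow>
     (\<exists>e :: nat \<Rightarrow> real^3.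
        (\<forall>i<l. is_effect n (e i)) \<and>
        (\<Sum>i<l. e i) = unit_effect n \<and>
        (\<forall>i<l. \<forall>j<l. e i \<bullet> \<omega> j = (if i = j then 1 else 0)))"

definition plogp :: "real \<Rightarrow> real" where
  "plogp p = (if p = 0 then 0 else p * ln p)"

definition entropy_like :: "enat \<Rightarrow> (real^3 \<Rightarrow> real) \<Rightarrow> bool" where
  "entropy_like n S \<longleftrightarrow>
     (\<forall>\<sigma>\<in>pure_states n. S \<sigma> = 0) \<and>
     (\<forall>l (\<omega> :: nat \<Rightarrow> real^3) (p :: nat \<Rightarrow> real).
        (\<forall>i<l. \<omega> i \<in> Omega n) \<and> perfectly_distinguishable n l \<omega> \<and>
        (\<forall>i<l. 0 \<le> p i) \<and> (\<Sum>i<l. p i) = 1 \<longrightarrow>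
        S (\<Sum>i<l. p i *\<^sub>R \<omega> i) = (\<Sum>i<l. p i * S (\<omega> i)) - (\<Sum>i<l. plogp (p i)))"

end

theory Submission
  imports Defs
begin

text \<open>An entropy-like \<open>S\<close> extends to the cone over the state space by
  \<open>F y = y$3 * S (y /\<^sub>R y$3) + eta (y$3)\<close> with \<open>eta t = - t ln t\<close>, and the mixing law says that
  \<open>F\<close> is additive on perfectly distinguishable pairs.
  For a regular polygon with \<open>m \<ge> 4\<close> vertices, the two edges at a vertex carry effects
  separating that vertex and its neighbours from an opposite vertex. Splitting one cone vector along
  either edge, in two ways, leaves an identity for \<open>eta\<close> alone, and elementary bounds on \<open>ln\<close>
  show that it fails (with different configurations for odd and even \<open>m\<close>).
  For the triangle, distinguishable states have disjoint supports in barycentric coordinates, so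
  the Shannon entropy of these coordinates is entropy-like. For the disc, distinguishable families
  are antipodal pairs of pure states, so the binary entropy of \<open>(1 \<plusminus> |v|) / 2\<close> is entropy-like.\<close>

section \<open>Geometry of the polygon state spaces\<close>

lemma polygon_vertex_nth:
  "polygon_vertex m i $ 1 = polygon_radius m * cos (2 * pi * real i / real m)"
  "polygon_vertex m i $ 2 = polygon_radius m * sin (2 * pi * real i / real m)"
  "polygon_vertex m i $ 3 = 1"
  by (simp_all add: polygon_vertex_def)

lemma polygon_vertex_eq_polar:
  assumes "2 * pi * real i / real m = \<theta>"
  shows "polygon_vertex m i = vector [polygon_radius m * cos \<theta>, polygon_radius m * sin \<theta>, 1]"
  using assms by (simp add: polygon_vertex_def)

lemma inner_vec3: "(a::real^3) \<bullet> b = a$1 * b$1 + a$2 * b$2 + a$3 * b$3"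
  by (simp add: inner_vec_def sum_3)

lemma vec3_eq_iff: "(x::real^3) = y \<longleftrightarrow> x$1 = y$1 \<and> x$2 = y$2 \<and> x$3 = y$3"
  by (simp add: vec_eq_iff forall_3)

lemma inner_axis3: "axis 3 1 \<bullet> (x::real^3) = x $ 3"
  by (simp add: inner_axis')

lemma polygon_radius_pos:
  assumes "m \<ge> 3"
  shows "polygon_radius m > 0"
proof -
  have "pi / real m \<le> pi / 3" using assms by (intro divide_left_mono) auto
  also have "\<dots> < pi / 2" by simp
  finally have "cos (pi / real m) > 0"
    using assms by (intro cos_gt_zero) (auto intro: less_le_trans[of _ 0])
  then show ?thesis by (simp add: polygon_radius_def)
qed

lemma Omega_enat: "Omega (enat m) = convex hull {polygon_vertex m i | i. i < m}"
  by (simp add: Omega_def)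

lemma Omega_infinity: "v \<in> Omega \<infinity> \<longleftrightarrow> v$3 = 1 \<and> (v$1)\<^sup>2 + (v$2)\<^sup>2 \<le> 1"
  by (simp add: Omega_def)

lemma convex_Omega: "convex (Omega n)"
proof (cases n)
  case infinity
  have "Omega \<infinity> = {v. axis 3 1 \<bullet> v = 1} \<inter> cball 0 (sqrt 2)"
    by (auto simp: Omega_infinity norm_eq_sqrt_inner inner_vec3 axis_def power2_eq_square)
  then show ?thesis
    using infinity by (simp add: convex_Int convex_hyperplane)
qed (simp add: Omega_enat)

lemma polygon_vertex_in_Omega: "i < m \<Longrightarrow> polygon_vertex m i \<in> Omega (enat m)"
  unfolding Omega_enat by (rule hull_inc) blast

lemma Omega_nth_3:
  assumes "\<omega> \<in> Omega n"
  shows "\<omega> $ 3 = 1"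
proof (cases n)
  case (enat m)
  have "convex {x::real^3. x $ 3 = 1}"
    unfolding convex_def by (auto simp: algebra_simps)
  then have "convex hull {polygon_vertex m i | i. i < m} \<subseteq> {x::real^3. x $ 3 = 1}"
    by (intro hull_minimal) (auto simp: polygon_vertex_nth)
  then show ?thesis using assms enat by (auto simp: Omega_enat)
next
  case infinity
  then show ?thesis using assms by (simp add: Omega_infinity)
qed

lemma is_effect_enatI:
  assumes "\<And>i. i < m \<Longrightarrow> 0 \<le> a \<bullet> polygon_vertex m i \<and> a \<bullet> polygon_vertex m i \<le> 1"
  shows "is_effect (enat m) a"
proof -
  have "convex ({x. a \<bullet> x \<ge> 0} \<inter> {x. a \<bullet> x \<le> 1})"
    by (intro convex_Int convex_halfspace_le convex_halfspace_ge)
  then have "convex hull {polygon_vertex m i | i. i < m} \<subseteq> {x. a \<bullet> x \<ge> 0} \<inter> {x. a \<bullet> x \<le> 1}"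
    by (intro hull_minimal) (use assms in auto)
  then show ?thesis unfolding is_effect_def Omega_enat by auto
qed

lemma unit_effect_eqI:
  assumes "\<And>u. \<forall>\<omega>\<in>Omega n. u \<bullet> \<omega> = 1 \<Longrightarrow> u = axis 3 1"
  shows "unit_effect n = axis 3 1"
  unfolding unit_effect_def
proof (rule the_equality)
  show "is_effect n (axis 3 1) \<and> (\<forall>\<omega>\<in>Omega n. axis 3 1 \<bullet> \<omega> = 1)"
    by (auto simp: is_effect_def inner_axis3 Omega_nth_3)
qed (use assms in blast)

lemma unit_effect_enat:
  assumes "m \<ge> 3"
  shows "unit_effect (enat m) = axis 3 1"
proof (rule unit_effect_eqI)
  fix u :: "real^3"
  assume u: "\<forall>\<omega>\<in>Omega (enat m). u \<bullet> \<omega> = 1"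
  define r where "r = polygon_radius m"
  define c where "c = cos (2 * pi / real m)"
  define s where "s = sin (2 * pi / real m)"
  have "r > 0" using polygon_radius_pos[OF assms] by (simp add: r_def)
  have "0 < 2 * pi / real m" "2 * pi / real m < pi"
    using assms by (simp_all add: field_simps)
  then have "s > 0" "c < 1"
    using cos_monotone_0_pi[of 0 "2 * pi / real m"] by (auto simp: s_def c_def sin_gt_zero)
  have "2 * pi * (real m - 1) / real m = 2 * pi - 2 * pi / real m"
    using assms by (simp add: field_simps)
  then have last: "cos (2 * pi * (real m - 1) / real m) = c"
    "sin (2 * pi * (real m - 1) / real m) = - s"
    by (simp_all add: c_def s_def cos_diff sin_diff)
  have "u \<bullet> polygon_vertex m i = 1" if "i < m" for i
    using u polygon_vertex_in_Omega[OF that] by blast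
  from this[of 0] this[of 1] this[of "m - 1"] assms
  have "u$1 * r + u$3 = 1" "u$1 * (r * c) + u$2 * (r * s) + u$3 = 1"
    "u$1 * (r * c) - u$2 * (r * s) + u$3 = 1"
    by (simp_all add: inner_vec3 polygon_vertex_nth last r_def c_def s_def)
  moreover from this have "u$2 * (r * s) = 0" by linarith
  with \<open>r > 0\<close> \<open>s > 0\<close> have "u$2 = 0" by simp
  ultimately have "u$3 + r * u$1 = 1" "u$3 + c * (r * u$1) = 1"
    by (simp_all add: algebra_simps)
  then have "(1 - c) * (r * u$1) = 0"
    by (simp only: left_diff_distrib)
  with \<open>r > 0\<close> \<open>c < 1\<close> \<open>u$2 = 0\<close> \<open>u$3 + r * u$1 = 1\<close> show "u = axis 3 1"
    by (simp add: vec3_eq_iff axis_def)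
qed

lemma unit_effect_infinity: "unit_effect \<infinity> = axis 3 1"
proof (rule unit_effect_eqI)
  fix u :: "real^3"
  assume u: "\<forall>\<omega>\<in>Omega \<infinity>. u \<bullet> \<omega> = 1"
  have "vector [1, 0, 1] \<in> Omega \<infinity>" "vector [-1, 0, 1] \<in> Omega \<infinity>" "vector [0, 1, 1] \<in> Omega \<infinity>"
    by (auto simp: Omega_infinity)
  with u have "u$1 + u$3 = 1" "- u$1 + u$3 = 1" "u$2 + u$3 = 1"
    by (auto simp: inner_vec3)
  then show "u = axis 3 1" by (simp add: vec3_eq_iff axis_def)
qed

lemma unit_effect_eq_axis: "n \<ge> 3 \<Longrightarrow> unit_effect n = axis 3 1"
  by (cases n) (auto simp: unit_effect_enat unit_effect_infinity numeral_eq_enat)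

lemma cos_polygon_angle_diff_lt_1:
  assumes "i < m" "k < m" "i \<noteq> k"
  shows "cos (2 * pi * real i / real m - 2 * pi * real k / real m) < 1"
proof -
  have "cos (2 * pi * real i / real m - 2 * pi * real k / real m) \<noteq> 1"
  proof
    assume "cos (2 * pi * real i / real m - 2 * pi * real k / real m) = 1"
    then obtain z :: int where z: "2 * pi * real i / real m - 2 * pi * real k / real m = z * 2 * pi"
      by (auto simp: cos_one_2pi_int)
    have "2 * pi * (real i - real k) = 2 * pi * (real_of_int z * real m)"
      using z assms by (simp add: field_simps)
    then have "real i - real k = real_of_int z * real m" by simp
    then have eq: "int i - int k = z * int m"
      by (metis of_int_eq_iff of_int_mult of_int_of_nat_eq of_int_diff)
    with assms have "z \<noteq> 0" by auto
    then have "\<bar>z\<bar> * int m \<ge> int m" using assms by (simp add: mult_le_cancel_right1)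
    moreover have "\<bar>int i - int k\<bar> < int m" using assms by auto
    ultimately show False using eq by (simp add: abs_mult)
  qed
  then show ?thesis using cos_le_one le_less by blast
qed

text \<open>The linear functional pointing towards the \<open>k\<close>-th vertex attains its maximum over the
  polygon only there.\<close>

lemma polygon_vertex_pure:
  assumes "m \<ge> 3" "k < m"
  shows "polygon_vertex m k \<in> pure_states (enat m)"
proof -
  define V where "V = {polygon_vertex m i | i. i < m}"
  define v where "v = polygon_vertex m k"
  define r where "r = polygon_radius m"
  define a :: "real^3" where "a = vector [cos (2 * pi * real k / real m), sin (2 * pi * real k / real m), 0]"
  have a_vertex: "a \<bullet> polygon_vertex m i = r * cos (2 * pi * real i / real m - 2 * pi * real k / real m)" for i
    by (simp add: a_def inner_vec3 polygon_vertex_nth r_def cos_diff algebra_simps)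
  have "r > 0" using polygon_radius_pos[OF assms(1)] by (simp add: r_def)
  have "convex hull (V - {v}) \<subseteq> {x. a \<bullet> x < r}"
  proof (rule hull_minimal)
    show "V - {v} \<subseteq> {x. a \<bullet> x < r}"
    proof
      fix x assume "x \<in> V - {v}"
      then obtain i where "i < m" "i \<noteq> k" "x = polygon_vertex m i"
        by (auto simp: V_def v_def)
      then show "x \<in> {x. a \<bullet> x < r}"
        using cos_polygon_angle_diff_lt_1[of i m k] \<open>r > 0\<close> assms(2) by (simp add: a_vertex)
    qed
  qed (rule convex_halfspace_lt)
  moreover have "a \<bullet> v = r" by (simp add: v_def a_vertex)
  ultimately have "v \<notin> convex hull (V - {v})" by auto
  then have "v extreme_point_of (convex hull (insert v (V - {v})))"
    by (intro extreme_point_of_convex_hull_insert) (auto simp: V_def)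
  moreover have "insert v (V - {v}) = V" using assms by (auto simp: V_def v_def)
  ultimately show ?thesis by (simp add: pure_states_def Omega_enat V_def v_def)
qed

section \<open>The cone extension of an entropy-like function\<close>

definition eta :: "real \<Rightarrow> real" where
  "eta t = - plogp t"

lemma eta_0 [simp]: "eta 0 = 0" and eta_1 [simp]: "eta 1 = 0"
  by (simp_all add: eta_def plogp_def)

lemma eta_pos: "t > 0 \<Longrightarrow> eta t = - (t * ln t)"
  by (simp add: eta_def plogp_def)

lemma eta_mult: "0 \<le> a \<Longrightarrow> 0 \<le> b \<Longrightarrow> eta (a * b) = a * eta b + b * eta a"
  by (cases "a = 0 \<or> b = 0") (auto simp: eta_pos ln_mult_pos algebra_simps)

lemma plogp_divide:
  assumes "s > 0" "a \<ge> 0"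
  shows "s * plogp (a / s) = plogp a - a * ln s"
  using assms by (cases "a = 0") (auto simp: plogp_def ln_div algebra_simps)

definition cone_extension :: "(real^3 \<Rightarrow> real) \<Rightarrow> real^3 \<Rightarrow> real" where
  "cone_extension S y = y$3 * S ((1 / y$3) *\<^sub>R y) + eta (y$3)"

lemma cone_extension_scaleR:
  assumes "\<omega>$3 = 1" "t \<ge> 0"
  shows "cone_extension S (t *\<^sub>R \<omega>) = t * S \<omega> + eta t"
  using assms by (cases "t = 0") (auto simp: cone_extension_def)

lemma perfectly_distinguishable_pairI:
  assumes "n \<ge> 3" "is_effect n e" "\<omega>0 \<in> Omega n" "\<omega>1 \<in> Omega n" "e \<bullet> \<omega>0 = 0" "e \<bullet> \<omega>1 = 1"
  shows "perfectly_distinguishable n 2 (\<lambda>i. if i = 0 then \<omega>0 else \<omega>1)"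
  unfolding perfectly_distinguishable_def
proof (intro exI[of _ "\<lambda>i. if i = 0 then axis 3 1 - e else e"] conjI allI impI)
  have "is_effect n (axis 3 1 - e)"
    using assms(2) by (auto simp: is_effect_def inner_diff_left inner_axis3 Omega_nth_3)
  then show "is_effect n (if i = 0 then axis 3 1 - e else e)" for i :: nat
    using assms(2) by auto
  show "(\<Sum>i<(2::nat). if i = 0 then axis 3 1 - e else e) = unit_effect n"
    using unit_effect_eq_axis[OF assms(1)] by (simp add: numeral_2_eq_2)
  show "(if i = 0 then axis 3 1 - e else e) \<bullet> (if j = 0 then \<omega>0 else \<omega>1) = (if i = j then 1 else 0)"
    if "i < 2" "j < 2" for i j :: nat
    using that assms by (auto simp: less_2_cases_iff inner_diff_left inner_axis3 Omega_nth_3)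
qed

lemma cone_extension_add:
  assumes S: "entropy_like n S" and \<omega>: "\<omega>0 \<in> Omega n" "\<omega>1 \<in> Omega n"
    and pd: "perfectly_distinguishable n 2 (\<lambda>i. if i = 0 then \<omega>0 else \<omega>1)"
    and ab: "a \<ge> 0" "b \<ge> 0" "a + b > 0"
  shows "cone_extension S (a *\<^sub>R \<omega>0 + b *\<^sub>R \<omega>1) = cone_extension S (a *\<^sub>R \<omega>0) + cone_extension S (b *\<^sub>R \<omega>1)"
proof -
  define s where "s = a + b"
  have "s > 0" using ab by (simp add: s_def)
  have z: "\<omega>0 $ 3 = 1" "\<omega>1 $ 3 = 1" using \<omega> Omega_nth_3 by auto
  have mix: "S ((a/s) *\<^sub>R \<omega>0 + (b/s) *\<^sub>R \<omega>1) = (a/s) * S \<omega>0 + (b/s) * S \<omega>1 - plogp (a/s) - plogp (b/s)"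
    using S \<omega> pd ab \<open>s > 0\<close> unfolding entropy_like_def
    by (elim conjE allE[of _ 2] allE[of _ "\<lambda>i. if i = 0 then \<omega>0 else \<omega>1"]
        allE[of _ "\<lambda>i. if i = 0 then a / s else b / s"])
       (auto simp: numeral_2_eq_2 less_Suc_eq s_def add_divide_distrib[symmetric])
  have "(a *\<^sub>R \<omega>0 + b *\<^sub>R \<omega>1) $ 3 = s" using z by (simp add: s_def)
  moreover have "(1 / s) *\<^sub>R (a *\<^sub>R \<omega>0 + b *\<^sub>R \<omega>1) = (a/s) *\<^sub>R \<omega>0 + (b/s) *\<^sub>R \<omega>1"
    by (simp add: scaleR_add_right)
  ultimately have "cone_extension S (a *\<^sub>R \<omega>0 + b *\<^sub>R \<omega>1)
      = s * ((a/s) * S \<omega>0 + (b/s) * S \<omega>1 - plogp (a/s) - plogp (b/s)) + eta s"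
    by (simp add: cone_extension_def mix)
  also have "\<dots> = a * S \<omega>0 + b * S \<omega>1 - s * plogp (a/s) - s * plogp (b/s) + eta s"
    using \<open>s > 0\<close> by (simp add: algebra_simps)
  also have "\<dots> = a * S \<omega>0 + b * S \<omega>1 + eta a + eta b"
  proof -
    have "a * ln s + b * ln s = s * ln s" by (simp add: s_def algebra_simps)
    then show ?thesis
      using ab \<open>s > 0\<close> by (simp add: plogp_divide eta_def plogp_def[of s])
  qed
  also have "\<dots> = cone_extension S (a *\<^sub>R \<omega>0) + cone_extension S (b *\<^sub>R \<omega>1)"
    using z ab by (simp add: cone_extension_scaleR)
  finally show ?thesis .
qed

text \<open>An effect vanishing at \<open>\<omega>0\<close> and equal to \<open>1\<close> at \<open>u\<close> and \<open>v\<close> distinguishes \<open>\<omega>0\<close> from every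
  mixture of \<open>u\<close> and \<open>v\<close>.\<close>

lemma cone_extension_add_separated:
  assumes S: "entropy_like n S" and "n \<ge> 3" and e: "is_effect n e"
    and mem: "\<omega>0 \<in> Omega n" "u \<in> Omega n" "v \<in> Omega n"
    and ev: "e \<bullet> \<omega>0 = 0" "e \<bullet> u = 1" "e \<bullet> v = 1"
    and coeffs: "a \<ge> 0" "b \<ge> 0" "c \<ge> 0" "b + c > 0"
  shows "cone_extension S (a *\<^sub>R \<omega>0 + (b *\<^sub>R u + c *\<^sub>R v))
    = cone_extension S (a *\<^sub>R \<omega>0) + cone_extension S (b *\<^sub>R u + c *\<^sub>R v)"
proof -
  define t where "t = b + c"
  have "t > 0" using coeffs by (simp add: t_def)
  define q where "q = (b/t) *\<^sub>R u + (c/t) *\<^sub>R v"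
  have "q \<in> Omega n" unfolding q_def
    using convex_Omega mem coeffs \<open>t > 0\<close>
    by (intro convexD) (auto simp: t_def add_divide_distrib[symmetric])
  moreover have "e \<bullet> q = 1"
    using ev \<open>t > 0\<close> by (simp add: q_def inner_add_right t_def add_divide_distrib[symmetric])
  moreover have "b *\<^sub>R u + c *\<^sub>R v = t *\<^sub>R q"
    using \<open>t > 0\<close> by (simp add: q_def scaleR_add_right)
  ultimately show ?thesis
    using cone_extension_add[OF S mem(1) _ perfectly_distinguishable_pairI] assms \<open>t > 0\<close>
    by simp
qed

section \<open>Polygons with at least four vertices\<close>

lemma cos_odd_multiple_le:
  assumes "odd k" "k < 2 * m"
  shows "cos (real k * pi / real m) \<le> cos (pi / real m)"
proof -
  define d where "d = pi / real m"
  have "m > 0" using assms by simp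
  then have "d > 0" by (simp add: d_def)
  have "1 \<le> k" "k + 1 \<le> 2 * m" using assms by (auto elim!: oddE)
  then have "1 \<le> real k" "real k \<le> 2 * real m - 1" by linarith+
  then have lo: "d \<le> real k * d" and "real k * d \<le> (2 * real m - 1) * d"
    using \<open>d > 0\<close> by (auto intro: mult_right_mono)
  moreover have "(2 * real m - 1) * d = 2 * pi - d"
    using \<open>m > 0\<close> by (simp add: d_def field_simps)
  ultimately have hi: "real k * d \<le> 2 * pi - d" by linarith
  have "cos (real k * d) \<le> cos d"
  proof (cases "real k * d \<le> pi")
    case True
    then show ?thesis using lo \<open>d > 0\<close> by (intro cos_monotone_0_pi_le) auto
  next
    case False
    have "cos (real k * d) = cos (2 * pi - real k * d)" by simp
    also have "\<dots> \<le> cos d" using False hi \<open>d > 0\<close> by (intro cos_monotone_0_pi_le) auto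
    finally show ?thesis .
  qed
  then show ?thesis by (simp add: d_def)
qed

lemma cos_odd_multiple_ge:
  assumes "even m" "odd k" "k < 2 * m"
  shows "- cos (pi / real m) \<le> cos (real k * pi / real m)"
proof -
  define d where "d = pi / real m"
  have "m > 0" using assms by simp
  then have "d > 0" by (simp add: d_def)
  have md: "real m * d = pi" "d * real m = pi" using \<open>m > 0\<close> by (simp_all add: d_def)
  have "k \<noteq> m" using assms by auto
  then have "k + 1 \<le> m \<or> m + 1 \<le> k" by linarith
  then have "real k * d \<le> pi - d \<or> pi + d \<le> real k * d"
    using \<open>d > 0\<close> mult_right_mono[of "real k + 1" "real m" d] mult_right_mono[of "real m + 1" "real k" d]
    by (auto simp: md algebra_simps)
  moreover have "real k * d \<le> 2 * real m * d"
    using assms \<open>d > 0\<close> by (intro mult_right_mono) auto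
  then have "real k * d \<le> 2 * pi" by (simp add: md mult.assoc)
  ultimately have "cos (pi - d) \<le> cos (real k * d)"
  proof (elim disjE)
    assume "real k * d \<le> pi - d"
    then show ?thesis using \<open>d > 0\<close> by (intro cos_monotone_0_pi_le) auto
  next
    assume "pi + d \<le> real k * d" "real k * d \<le> 2 * pi"
    then have "cos (pi - d) \<le> cos (2 * pi - real k * d)"
      using \<open>d > 0\<close> by (intro cos_monotone_0_pi_le) auto
    then show ?thesis by simp
  qed
  then show ?thesis by (simp add: d_def)
qed

lemma cos_polygon_angle_shift:
  assumes "i < m"
  obtains k k' where "odd k" "k < 2 * m" "cos (2 * pi * real i / real m - pi / real m) = cos (real k * pi / real m)"
    and "odd k'" "k' < 2 * m" "cos (2 * pi * real i / real m + pi / real m) = cos (real k' * pi / real m)"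
proof -
  have "odd (2 * i + 1)" "2 * i + 1 < 2 * m" using assms by auto
  moreover have "2 * pi * real i / real m + pi / real m = real (2 * i + 1) * pi / real m"
    using assms by (simp add: field_simps)
  moreover have "\<exists>k. odd k \<and> k < 2 * m \<and>
      cos (2 * pi * real i / real m - pi / real m) = cos (real k * pi / real m)"
  proof (cases i)
    case 0
    then show ?thesis using assms by (intro exI[of _ 1]) simp
  next
    case (Suc j)
    have "2 * pi * real i / real m - pi / real m = real (2 * j + 1) * pi / real m"
      using assms by (simp add: Suc field_simps)
    then show ?thesis using assms Suc by (intro exI[of _ "2 * j + 1"]) auto
  qed
  ultimately show ?thesis using that by metis
qed

text \<open>For \<open>\<phi> = \<plusminus>pi/m\<close> this is the effect equal to \<open>1\<close> on the edge of the polygon with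
  outer normal direction \<open>\<phi>\<close> and vanishing on the parallel line
  \<open>cos (\<theta> - \<phi>) = -L\<close> (in polar coordinates scaled by the radius).\<close>

definition side_effect :: "nat \<Rightarrow> real \<Rightarrow> real \<Rightarrow> real^3" where
  "side_effect m \<phi> L = (1 / (polygon_radius m * (cos (pi / real m) + L))) *\<^sub>R
     vector [cos \<phi>, sin \<phi>, polygon_radius m * L]"

lemma side_effect_inner_vertex:
  assumes "m \<ge> 3" "cos (pi / real m) + L > 0"
  shows "side_effect m \<phi> L \<bullet> polygon_vertex m i
    = (cos (2 * pi * real i / real m - \<phi>) + L) / (cos (pi / real m) + L)"
proof -
  define t where "t = 2 * pi * real i / real m"
  define r where "r = polygon_radius m"
  have "r > 0" using polygon_radius_pos[OF assms(1)] by (simp add: r_def)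
  have "side_effect m \<phi> L \<bullet> polygon_vertex m i
      = (1 / (r * (cos (pi / real m) + L))) * (r * (cos t * cos \<phi> + sin t * sin \<phi> + L))"
    by (simp add: side_effect_def inner_vec3 polygon_vertex_nth t_def r_def algebra_simps)
  also have "\<dots> = (cos (t - \<phi>) + L) / (cos (pi / real m) + L)"
    using \<open>r > 0\<close> assms(2) by (simp add: cos_diff)
  finally show ?thesis by (simp add: t_def)
qed

lemma is_effect_side_effect:
  assumes "m \<ge> 3" "cos (pi / real m) + L > 0"
    and lower: "\<And>k. odd k \<Longrightarrow> k < 2 * m \<Longrightarrow> - L \<le> cos (real k * pi / real m)"
  shows "is_effect (enat m) (side_effect m (pi / real m) L)"
    and "is_effect (enat m) (side_effect m (- (pi / real m)) L)"
proof -
  have bounds: "- L \<le> cos (2 * pi * real i / real m - \<phi>) \<and> cos (2 * pi * real i / real m - \<phi>) \<le> cos (pi / real m)"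
    if "i < m" "\<phi> = pi / real m \<or> \<phi> = - (pi / real m)" for i \<phi>
    using cos_polygon_angle_shift[OF \<open>i < m\<close>] that(2) lower cos_odd_multiple_le by auto metis+
  then have "is_effect (enat m) (side_effect m \<phi> L)" if "\<phi> = pi / real m \<or> \<phi> = - (pi / real m)" for \<phi>
  proof (intro is_effect_enatI)
    fix i assume "i < m"
    with that bounds
    have "- L \<le> cos (2 * pi * real i / real m - \<phi>)" "cos (2 * pi * real i / real m - \<phi>) \<le> cos (pi / real m)"
      by blast+
    with assms(2) show "0 \<le> side_effect m \<phi> L \<bullet> polygon_vertex m i \<and> side_effect m \<phi> L \<bullet> polygon_vertex m i \<le> 1"
      by (simp add: side_effect_inner_vertex[OF assms(1,2)])
  qed
  then show "is_effect (enat m) (side_effect m (pi / real m) L)"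
    and "is_effect (enat m) (side_effect m (- (pi / real m)) L)" by auto
qed

lemma side_effect_edge_vertices:
  assumes "m \<ge> 3" "cos (pi / real m) + L > 0"
  shows "side_effect m (pi / real m) L \<bullet> polygon_vertex m 0 = 1"
    and "side_effect m (pi / real m) L \<bullet> polygon_vertex m 1 = 1"
    and "side_effect m (- (pi / real m)) L \<bullet> polygon_vertex m 0 = 1"
    and "side_effect m (- (pi / real m)) L \<bullet> polygon_vertex m (m - 1) = 1"
proof -
  have last: "2 * pi * real (m - 1) / real m + pi / real m = 2 * pi - pi / real m"
    using assms(1) by (simp add: of_nat_diff field_simps)
  have "2 * pi * real 1 / real m - pi / real m = pi / real m"
    using assms(1) by (simp add: field_simps)
  moreover have "cos (2 * pi * real (m - 1) / real m - - (pi / real m)) = cos (pi / real m)"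
    unfolding diff_minus_eq_add last by simp
  ultimately show "side_effect m (pi / real m) L \<bullet> polygon_vertex m 0 = 1"
    and "side_effect m (pi / real m) L \<bullet> polygon_vertex m 1 = 1"
    and "side_effect m (- (pi / real m)) L \<bullet> polygon_vertex m 0 = 1"
    and "side_effect m (- (pi / real m)) L \<bullet> polygon_vertex m (m - 1) = 1"
    using assms(2) by (simp_all only: side_effect_inner_vertex[OF assms]) simp_all
qed

text \<open>The cone vector \<open>(x + \<sigma>) V + (1 - x) A + B = (1 + \<sigma> x') P + (1 - \<sigma> x') A + \<sigma> C\<close> is split
  along the two separating effects in two ways; comparing with the splittings of \<open>A + P\<close> and
  \<open>A + \<sigma> V\<close> leaves an identity involving only \<^const>\<open>eta\<close>.\<close>

lemma entropy_like_eta_identity: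
  assumes S: "entropy_like n S" and "n \<ge> 3"
    and mem: "A \<in> Omega n" "B \<in> Omega n" "C \<in> Omega n" "P \<in> Omega n" "V \<in> Omega n"
    and pure: "S A = 0" "S P = 0" "S V = 0"
    and Ep: "is_effect n Ep" "Ep \<bullet> A = 1" "Ep \<bullet> B = 1" "Ep \<bullet> V = 0"
    and Em: "is_effect n Em" "Em \<bullet> A = 1" "Em \<bullet> C = 1" "Em \<bullet> P = 0"
    and x: "0 \<le> x" "x \<le> 1" and "\<sigma> > 0" and x': "0 \<le> x'" "\<sigma> * x' \<le> 1"
    and decomp1: "A + P = x *\<^sub>R V + ((1 - x) *\<^sub>R A + B)"
    and decomp2: "A + \<sigma> *\<^sub>R V = (\<sigma> * x') *\<^sub>R P + ((1 - \<sigma> * x') *\<^sub>R A + \<sigma> *\<^sub>R C)"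
  shows "eta (x + \<sigma>) - eta x = eta (1 + \<sigma> * x') + eta \<sigma> - eta (\<sigma> * x')"
proof -
  let ?F = "cone_extension S"
  have z: "A$3 = 1" "P$3 = 1" "V$3 = 1" using mem Omega_nth_3 by auto
  have FA: "?F (t *\<^sub>R A) = eta t" and FP: "?F (t *\<^sub>R P) = eta t" and FV: "?F (t *\<^sub>R V) = eta t"
    if "t \<ge> 0" for t
    using cone_extension_scaleR[of _ t S] z pure that by simp_all
  note split_p = cone_extension_add_separated[OF S \<open>n \<ge> 3\<close> Ep(1) mem(5,1,2) Ep(4,2,3)]
  note split_m = cone_extension_add_separated[OF S \<open>n \<ge> 3\<close> Em(1) mem(4,1,3) Em(4,2,3)]
  define a1 where "a1 = ?F ((1 - x) *\<^sub>R A + 1 *\<^sub>R B)"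
  define a2 where "a2 = ?F ((1 - \<sigma> * x') *\<^sub>R A + \<sigma> *\<^sub>R C)"
  have "?F (1 *\<^sub>R P + (1 *\<^sub>R A + 0 *\<^sub>R C)) = ?F (1 *\<^sub>R P) + ?F (1 *\<^sub>R A + 0 *\<^sub>R C)"
    by (rule split_m) auto
  then have "?F (A + P) = 0" using FA[of 1] FP[of 1] by (simp add: add.commute)
  moreover have "?F (x *\<^sub>R V + ((1 - x) *\<^sub>R A + 1 *\<^sub>R B)) = ?F (x *\<^sub>R V) + a1"
    unfolding a1_def by (rule split_p) (use x in auto)
  ultimately have a1: "a1 = - eta x" using decomp1 FV[of x] x by simp
  have "?F (\<sigma> *\<^sub>R V + (1 *\<^sub>R A + 0 *\<^sub>R B)) = ?F (\<sigma> *\<^sub>R V) + ?F (1 *\<^sub>R A + 0 *\<^sub>R B)"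
    by (rule split_p) (use \<open>\<sigma> > 0\<close> in auto)
  then have "?F (A + \<sigma> *\<^sub>R V) = eta \<sigma>" using FA[of 1] FV[of \<sigma>] \<open>\<sigma> > 0\<close> by (simp add: add.commute)
  moreover have "?F ((\<sigma> * x') *\<^sub>R P + ((1 - \<sigma> * x') *\<^sub>R A + \<sigma> *\<^sub>R C)) = ?F ((\<sigma> * x') *\<^sub>R P) + a2"
    unfolding a2_def by (rule split_m) (use \<open>\<sigma> > 0\<close> x' in auto)
  ultimately have a2: "a2 = eta \<sigma> - eta (\<sigma> * x')" using decomp2 FP[of "\<sigma> * x'"] \<open>\<sigma> > 0\<close> x' by simp
  have "(x + \<sigma>) *\<^sub>R V + ((1 - x) *\<^sub>R A + 1 *\<^sub>R B) = P + (A + \<sigma> *\<^sub>R V)"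
    using decomp1 by (simp add: scaleR_add_left algebra_simps)
  also have "\<dots> = (1 + \<sigma> * x') *\<^sub>R P + ((1 - \<sigma> * x') *\<^sub>R A + \<sigma> *\<^sub>R C)"
    unfolding decomp2 by (simp add: scaleR_add_left algebra_simps)
  finally have "?F ((x + \<sigma>) *\<^sub>R V + ((1 - x) *\<^sub>R A + 1 *\<^sub>R B))
      = ?F ((1 + \<sigma> * x') *\<^sub>R P + ((1 - \<sigma> * x') *\<^sub>R A + \<sigma> *\<^sub>R C))" by simp
  moreover have "?F ((x + \<sigma>) *\<^sub>R V + ((1 - x) *\<^sub>R A + 1 *\<^sub>R B)) = ?F ((x + \<sigma>) *\<^sub>R V) + a1"
    unfolding a1_def by (rule split_p) (use x \<open>\<sigma> > 0\<close> in auto)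
  moreover have "?F ((1 + \<sigma> * x') *\<^sub>R P + ((1 - \<sigma> * x') *\<^sub>R A + \<sigma> *\<^sub>R C)) = ?F ((1 + \<sigma> * x') *\<^sub>R P) + a2"
    unfolding a2_def by (rule split_m) (use \<open>\<sigma> > 0\<close> x' in auto)
  ultimately have "eta (x + \<sigma>) + a1 = eta (1 + \<sigma> * x') + a2"
    using FV[of "x + \<sigma>"] FP[of "1 + \<sigma> * x'"] x \<open>\<sigma> > 0\<close> x' by simp
  then show ?thesis using a1 a2 by simp
qed

lemma ln_le_quadratic:
  fixes y :: real
  assumes "0 < y" "y \<le> 1"
  shows "ln y \<le> (y - 1) - (y - 1)\<^sup>2 / 2"
proof -
  let ?f = "\<lambda>t::real. ln t - (t - 1) + (t - 1)\<^sup>2 / 2"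
  have "?f y \<le> ?f 1"
  proof (rule DERIV_nonneg_imp_increasing_open[OF assms(2)])
    fix t assume t: "y < t" "t < 1"
    then have "t > 0" using assms by simp
    have "(?f has_real_derivative (1/t - 1 + (t - 1))) (at t)"
      using \<open>t > 0\<close> by (auto intro!: derivative_eq_intros simp: field_simps)
    moreover have "1/t - 1 + (t - 1) = (t - 1)\<^sup>2 / t"
      using \<open>t > 0\<close> by (simp add: field_simps power2_eq_square)
    ultimately show "\<exists>d. (?f has_real_derivative d) (at t) \<and> d \<ge> 0"
      using \<open>t > 0\<close> by auto
  qed (use assms in \<open>auto intro!: continuous_intros\<close>)
  then show ?thesis by simp
qed

lemma one_minus_inverse_le_ln:
  fixes y :: real
  assumes "0 < y"
  shows "1 - 1 / y \<le> ln y"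
  using ln_le_minus_one[of "1 / y"] assms by (simp add: ln_div)

lemma eta_ineq_odd:
  assumes "0 < x" "x < 1"
  shows "eta 1 - eta x < eta (1 + (1 - x) * x) + eta (1 - x) - eta ((1 - x) * x)"
proof -
  define u where "u = (1 - x) * x"
  have "u > 0" using assms by (simp add: u_def)
  have "eta 1 - eta x - (eta (1 + u) + eta (1 - x) - eta u)
      = x\<^sup>2 * ln x + (1 - x)\<^sup>2 * ln (1 - x) + (1 + u) * ln (1 + u)"
  proof -
    have "ln u = ln x + ln (1 - x)"
      using assms by (simp add: u_def ln_mult_pos)
    then have "eta u = - ((1 - x) * x * ln x + (1 - x) * x * ln (1 - x))"
      using \<open>u > 0\<close> by (simp add: eta_pos u_def algebra_simps)
    moreover have "eta (1 + u) = - ((1 + u) * ln (1 + u))"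
      using \<open>u > 0\<close> by (simp add: eta_pos)
    ultimately show ?thesis
      using assms by (simp add: eta_pos power2_eq_square algebra_simps)
  qed
  also have "\<dots> < x\<^sup>2 * ((x - 1) - (x - 1)\<^sup>2 / 2)
      + (1 - x)\<^sup>2 * (((1 - x) - 1) - ((1 - x) - 1)\<^sup>2 / 2) + (1 + u) * u"
  proof -
    have "x\<^sup>2 * ln x \<le> x\<^sup>2 * ((x - 1) - (x - 1)\<^sup>2 / 2)"
      using ln_le_quadratic[of x] assms by (intro mult_left_mono) auto
    moreover have "(1 - x)\<^sup>2 * ln (1 - x) \<le> (1 - x)\<^sup>2 * (((1 - x) - 1) - ((1 - x) - 1)\<^sup>2 / 2)"
      using ln_le_quadratic[of "1 - x"] assms by (intro mult_left_mono) auto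
    moreover have "(1 + u) * ln (1 + u) < (1 + u) * u"
      using ln_add_one_self_less_self[OF \<open>u > 0\<close>] \<open>u > 0\<close> by (intro mult_strict_left_mono) auto
    ultimately show ?thesis by linarith
  qed
  also have "\<dots> = 0"
    by (simp add: u_def power2_eq_square field_simps)
  finally show ?thesis unfolding u_def by simp
qed

lemma eta_ineq_even:
  assumes "0 \<le> x" "x < 1"
  shows "eta 2 < eta (1 + x) - eta x"
proof (cases "x = 0")
  case True
  then show ?thesis by (simp add: eta_pos)
next
  case False
  with assms have "x > 0" by simp
  have "1 - (1 + x) / (2 * x) \<le> ln 2 + ln x - ln (1 + x)"
    using one_minus_inverse_le_ln[of "2 * x / (1 + x)"] \<open>x > 0\<close> by (simp add: ln_div ln_mult_pos)
  then have "x * (1 - (1 + x) / (2 * x)) \<le> x * (ln 2 + ln x - ln (1 + x))"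
    using \<open>x > 0\<close> by (intro mult_left_mono) auto
  moreover have "x * (1 - (1 + x) / (2 * x)) = (x - 1) / 2"
    using \<open>x > 0\<close> by (simp add: field_simps)
  moreover have "1 - (1 + x) / 2 \<le> ln 2 - ln (1 + x)"
    using one_minus_inverse_le_ln[of "2 / (1 + x)"] \<open>x > 0\<close> by (simp add: ln_div)
  ultimately have "- (x * (ln 2 + ln x - ln (1 + x)) + (ln 2 - ln (1 + x))) - (1 - x) * ln 2
      \<le> - ((x - 1) / 2 + (1 - (1 + x) / 2)) - (1 - x) * ln 2"
    by linarith
  also have "\<dots> < 0" using assms by simp
  finally have "(1 + x) * ln (1 + x) - x * ln x - 2 * ln 2 < 0"
    by (simp add: algebra_simps)
  then show ?thesis using \<open>x > 0\<close> by (simp add: eta_pos)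
qed

lemma entropy_like_polygon_vertex:
  assumes "entropy_like (enat m) S" "m \<ge> 3" "i < m"
  shows "S (polygon_vertex m i) = 0"
  using assms polygon_vertex_pure by (simp add: entropy_like_def)

lemma polygon_eta_identity:
  assumes S: "entropy_like (enat m) S" and "m \<ge> 3"
    and L: "cos (pi / real m) + L > 0" "\<And>k. odd k \<Longrightarrow> k < 2 * m \<Longrightarrow> - L \<le> cos (real k * pi / real m)"
    and "p < m" "v < m"
    and "cos (2 * pi * real v / real m - pi / real m) = - L"
    and "cos (2 * pi * real p / real m - - (pi / real m)) = - L"
    and "0 \<le> x" "x \<le> 1" "\<sigma> > 0" "0 \<le> x'" "\<sigma> * x' \<le> 1"
    and "polygon_vertex m 0 + polygon_vertex m p
      = x *\<^sub>R polygon_vertex m v + ((1 - x) *\<^sub>R polygon_vertex m 0 + polygon_vertex m 1)"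
    and "polygon_vertex m 0 + \<sigma> *\<^sub>R polygon_vertex m v
      = (\<sigma> * x') *\<^sub>R polygon_vertex m p + ((1 - \<sigma> * x') *\<^sub>R polygon_vertex m 0 + \<sigma> *\<^sub>R polygon_vertex m (m - 1))"
  shows "eta (x + \<sigma>) - eta x = eta (1 + \<sigma> * x') + eta \<sigma> - eta (\<sigma> * x')"
proof -
  have "enat m \<ge> 3" using \<open>m \<ge> 3\<close> by (simp add: numeral_eq_enat)
  have mem: "polygon_vertex m i \<in> Omega (enat m)" and pure: "S (polygon_vertex m i) = 0"
    if "i < m" for i
    using that polygon_vertex_in_Omega entropy_like_polygon_vertex[OF S \<open>m \<ge> 3\<close>] by auto
  note eff = is_effect_side_effect[OF \<open>m \<ge> 3\<close> L]
  note edge = side_effect_edge_vertices[OF \<open>m \<ge> 3\<close> L(1)]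
  have zero: "side_effect m (pi / real m) L \<bullet> polygon_vertex m v = 0"
    "side_effect m (- (pi / real m)) L \<bullet> polygon_vertex m p = 0"
    using assms by (simp_all add: side_effect_inner_vertex)
  show ?thesis
    by (rule entropy_like_eta_identity[OF S \<open>enat m \<ge> 3\<close> mem[of 0] mem[of 1] mem[of "m - 1"]
          mem[of p] mem[of v] pure[of 0] pure[of p] pure[of v] eff(1) edge(1,2) zero(1)
          eff(2) edge(3,4) zero(2)])
       (use assms in auto)
qed

lemma not_entropy_like_odd_polygon:
  assumes "odd m" "m \<ge> 5"
  shows "\<not> entropy_like (enat m) S"
proof
  assume S: "entropy_like (enat m) S"
  obtain j where j: "m = 2 * j + 1" using \<open>odd m\<close> by (auto elim: oddE)
  define d where "d = pi / real m"
  define r where "r = polygon_radius m"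
  define c where "c = cos d"
  define s where "s = sin d"
  have "0 < d" "d \<le> pi / 5"
    unfolding d_def using \<open>m \<ge> 5\<close> by (simp, intro divide_left_mono) auto
  then have "1 / 2 < c" "c < 1"
    using cos_monotone_0_pi[of d "pi / 3"] cos_monotone_0_pi[of 0 d] by (simp_all add: c_def cos_60)
  define x where "x = 2 * c - 1"
  have x: "0 < x" "x < 1" using \<open>1 / 2 < c\<close> \<open>c < 1\<close> by (auto simp: x_def)
  have angles: "2 * pi * real 0 / real m = 0" "2 * pi * real 1 / real m = 2 * d"
    "2 * pi * real (m - 1) / real m = - (2 * d) + 2 * pi"
    "2 * pi * real j / real m = pi - d" "2 * pi * real (j + 1) / real m = pi + d"
    using j by (simp_all add: d_def field_simps)
  have vertices: "polygon_vertex m 0 = vector [r, 0, 1]"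
    "polygon_vertex m 1 = vector [r * (2 * c\<^sup>2 - 1), r * (2 * s * c), 1]"
    "polygon_vertex m (m - 1) = vector [r * (2 * c\<^sup>2 - 1), - r * (2 * s * c), 1]"
    "polygon_vertex m j = vector [- r * c, r * s, 1]"
    "polygon_vertex m (j + 1) = vector [- r * c, - r * s, 1]"
    by (simp_all only: polygon_vertex_eq_polar[OF angles(1)] polygon_vertex_eq_polar[OF angles(2)]
        polygon_vertex_eq_polar[OF angles(3)] polygon_vertex_eq_polar[OF angles(4)]
        polygon_vertex_eq_polar[OF angles(5)])
      (simp_all add: r_def c_def s_def cos_double_cos sin_double cos_periodic sin_periodic)
  have "eta (x + (1 - x)) - eta x = eta (1 + (1 - x) * x) + eta (1 - x) - eta ((1 - x) * x)"
  proof (rule polygon_eta_identity[OF S, where L = 1 and p = j and v = "j + 1"])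
    show "polygon_vertex m 0 + polygon_vertex m j
      = x *\<^sub>R polygon_vertex m (j + 1) + ((1 - x) *\<^sub>R polygon_vertex m 0 + polygon_vertex m 1)"
      "polygon_vertex m 0 + (1 - x) *\<^sub>R polygon_vertex m (j + 1)
      = ((1 - x) * x) *\<^sub>R polygon_vertex m j
        + ((1 - (1 - x) * x) *\<^sub>R polygon_vertex m 0 + (1 - x) *\<^sub>R polygon_vertex m (m - 1))"
      unfolding vertices vec3_eq_iff by (simp_all add: x_def algebra_simps power2_eq_square)
    show "cos (2 * pi * real (j + 1) / real m - pi / real m) = - 1"
      "cos (2 * pi * real j / real m - - (pi / real m)) = - 1"
      unfolding angles by (simp_all add: d_def)
    show "(1 - x) * x \<le> 1" using x by (intro mult_le_one) auto
  qed (use x j \<open>m \<ge> 5\<close> \<open>1 / 2 < c\<close> in \<open>auto simp: c_def d_def\<close>)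
  then show False using eta_ineq_odd[OF x] by simp
qed

lemma not_entropy_like_even_polygon:
  assumes "even m" "m \<ge> 4"
  shows "\<not> entropy_like (enat m) S"
proof
  assume S: "entropy_like (enat m) S"
  obtain j where j: "m = 2 * j" using \<open>even m\<close> by (auto elim: evenE)
  define d where "d = pi / real m"
  define r where "r = polygon_radius m"
  have "0 < d" "d \<le> pi / 4"
    unfolding d_def using \<open>m \<ge> 4\<close> by (simp, intro divide_left_mono) auto
  then have "0 < cos d" "0 \<le> cos (2 * d)" "cos (2 * d) < 1"
    using cos_monotone_0_pi[of 0 "2 * d"] by (auto intro!: cos_gt_zero cos_ge_zero)
  have angles: "2 * pi * real 0 / real m = 0" "2 * pi * real 1 / real m = 2 * d"
    "2 * pi * real (m - 1) / real m = - (2 * d) + 2 * pi"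
    "2 * pi * real j / real m = pi" "2 * pi * real (j + 1) / real m = pi + 2 * d"
    using j \<open>m \<ge> 4\<close> by (simp_all add: d_def of_nat_diff field_simps)
  have vertices: "polygon_vertex m 0 = vector [r, 0, 1]"
    "polygon_vertex m 1 = vector [r * cos (2 * d), r * sin (2 * d), 1]"
    "polygon_vertex m (m - 1) = vector [r * cos (2 * d), - r * sin (2 * d), 1]"
    "polygon_vertex m j = vector [- r, 0, 1]"
    "polygon_vertex m (j + 1) = vector [- r * cos (2 * d), - r * sin (2 * d), 1]"
    by (simp_all only: polygon_vertex_eq_polar[OF angles(1)] polygon_vertex_eq_polar[OF angles(2)]
        polygon_vertex_eq_polar[OF angles(3)] polygon_vertex_eq_polar[OF angles(4)]
        polygon_vertex_eq_polar[OF angles(5)])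
      (simp_all add: r_def cos_periodic sin_periodic)
  have "eta (1 + 1) - eta 1 = eta (1 + 1 * cos (2 * d)) + eta 1 - eta (1 * cos (2 * d))"
  proof (rule polygon_eta_identity[OF S, where L = "cos d" and p = j and v = "j + 1"])
    show "polygon_vertex m 0 + polygon_vertex m j
      = 1 *\<^sub>R polygon_vertex m (j + 1) + ((1 - 1) *\<^sub>R polygon_vertex m 0 + polygon_vertex m 1)"
      "polygon_vertex m 0 + 1 *\<^sub>R polygon_vertex m (j + 1)
      = (1 * cos (2 * d)) *\<^sub>R polygon_vertex m j
        + ((1 - 1 * cos (2 * d)) *\<^sub>R polygon_vertex m 0 + 1 *\<^sub>R polygon_vertex m (m - 1))"
      unfolding vertices vec3_eq_iff by (simp_all add: algebra_simps)
    have "pi + 2 * d - d = pi + d" "pi - - d = pi + d" by simp_all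
    then show "cos (2 * pi * real (j + 1) / real m - pi / real m) = - cos d"
      "cos (2 * pi * real j / real m - - (pi / real m)) = - cos d"
      unfolding angles d_def[symmetric] by simp_all
    show "- cos d \<le> cos (real k * pi / real m)" if "odd k" "k < 2 * m" for k
      using cos_odd_multiple_ge[OF \<open>even m\<close> that] by (simp add: d_def)
  qed (use j \<open>m \<ge> 4\<close> \<open>0 < cos d\<close> \<open>0 \<le> cos (2 * d)\<close> \<open>cos (2 * d) < 1\<close> in \<open>auto simp: d_def\<close>)
  then show False using eta_ineq_even[OF \<open>0 \<le> cos (2 * d)\<close> \<open>cos (2 * d) < 1\<close>] by simp
qed

lemma not_entropy_like_polygon:
  assumes "m \<ge> 4"
  shows "\<not> entropy_like (enat m) S"
proof (cases "even m")
  case True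
  then show ?thesis using assms by (rule not_entropy_like_even_polygon)
next
  case False
  with assms have "m \<ge> 5" by presburger
  with False show ?thesis by (intro not_entropy_like_odd_polygon) auto
qed

section \<open>The disc\<close>

definition disc_entropy :: "real^3 \<Rightarrow> real" where
  "disc_entropy v = (let \<rho> = sqrt ((v$1)\<^sup>2 + (v$2)\<^sup>2) in eta ((1 + \<rho>) / 2) + eta ((1 - \<rho>) / 2))"

lemma disc_entropy_unit_circle: "(v$1)\<^sup>2 + (v$2)\<^sup>2 = 1 \<Longrightarrow> disc_entropy v = 0"
  by (simp add: disc_entropy_def)

lemma pure_states_infinity_unit_circle:
  assumes "v \<in> pure_states \<infinity>"
  shows "(v$1)\<^sup>2 + (v$2)\<^sup>2 = 1"
proof (rule ccontr)
  assume "(v$1)\<^sup>2 + (v$2)\<^sup>2 \<noteq> 1"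
  have ext: "v extreme_point_of Omega \<infinity>" using assms by (simp add: pure_states_def)
  then have "v \<in> Omega \<infinity>" by (simp add: extreme_point_of_def)
  with \<open>(v$1)\<^sup>2 + (v$2)\<^sup>2 \<noteq> 1\<close> have "v$3 = 1" "(v$1)\<^sup>2 + (v$2)\<^sup>2 < 1"
    unfolding Omega_infinity by argo+
  define e where "e = (1 - ((v$1)\<^sup>2 + (v$2)\<^sup>2)) / 4"
  have "0 \<le> (v$1)\<^sup>2 + (v$2)\<^sup>2" by simp
  with \<open>(v$1)\<^sup>2 + (v$2)\<^sup>2 < 1\<close> have "0 < e" "e \<le> 1 / 4" unfolding e_def by argo+
  have "(v$1)\<^sup>2 \<le> 1" using \<open>(v$1)\<^sup>2 + (v$2)\<^sup>2 < 1\<close> zero_le_power2[of "v$2"] by argo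
  then have "\<bar>v$1\<bar> \<le> 1" by (simp add: abs_square_le_1)
  have shifted: "v + t *\<^sub>R axis 1 1 \<in> Omega \<infinity>" if "\<bar>t\<bar> \<le> e" for t
  proof -
    have "t * v$1 \<le> \<bar>t\<bar> * \<bar>v$1\<bar>" using abs_ge_self[of "t * v$1"] by (simp add: abs_mult)
    also have "\<dots> \<le> e * 1" using that \<open>\<bar>v$1\<bar> \<le> 1\<close> \<open>0 < e\<close> by (intro mult_mono) auto
    finally have "t * v$1 \<le> e" by simp
    have "t\<^sup>2 = \<bar>t\<bar> * \<bar>t\<bar>" by (simp add: power2_eq_square)
    also have "\<dots> \<le> e * (1 / 4)" using that \<open>e \<le> 1 / 4\<close> by (intro mult_mono) auto
    finally have "t\<^sup>2 \<le> e / 4" by simp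
    have "(v$1 + t)\<^sup>2 + (v$2)\<^sup>2 = ((v$1)\<^sup>2 + (v$2)\<^sup>2) + 2 * (t * v$1) + t\<^sup>2"
      by (simp add: power2_sum algebra_simps)
    also have "\<dots> \<le> 1"
      using \<open>t * v$1 \<le> e\<close> \<open>t\<^sup>2 \<le> e / 4\<close> \<open>0 < e\<close> unfolding e_def by argo
    finally show ?thesis using \<open>v$3 = 1\<close> by (simp add: Omega_infinity axis_def)
  qed
  define a b where "a = v + e *\<^sub>R axis 1 1" and "b = v - e *\<^sub>R axis 1 1"
  have "a \<in> Omega \<infinity>" "b \<in> Omega \<infinity>"
    using shifted[of e] shifted[of "- e"] \<open>0 < e\<close> by (simp_all add: a_def b_def)
  have "a \<noteq> b" using \<open>0 < e\<close> by (simp add: a_def b_def vec3_eq_iff axis_def)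
  then have "midpoint a b \<in> open_segment a b" by simp
  moreover have "midpoint a b = v" by (simp add: a_def b_def midpoint_def vec3_eq_iff)
  ultimately have "v \<in> open_segment a b" by simp
  with ext \<open>a \<in> Omega \<infinity>\<close> \<open>b \<in> Omega \<infinity>\<close> show False
    unfolding extreme_point_of_def by blast
qed

lemma unit_circle_eq_of_inner_ge_1:
  fixes \<alpha> \<beta> x y :: real
  assumes "\<alpha>\<^sup>2 + \<beta>\<^sup>2 = 1" "x\<^sup>2 + y\<^sup>2 \<le> 1" "\<alpha> * x + \<beta> * y \<ge> 1"
  shows "x = \<alpha>" "y = \<beta>"
proof -
  have expand: "(x - \<alpha>)\<^sup>2 + (y - \<beta>)\<^sup>2 = (x\<^sup>2 + y\<^sup>2) - 2 * (\<alpha> * x + \<beta> * y) + (\<alpha>\<^sup>2 + \<beta>\<^sup>2)"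
    by (simp add: power2_eq_square algebra_simps)
  have "(x - \<alpha>)\<^sup>2 + (y - \<beta>)\<^sup>2 \<le> 0" unfolding expand using assms by argo
  then show "x = \<alpha>" "y = \<beta>" by (simp_all add: sum_power2_le_zero_iff)
qed

lemma disc_effect_antipodal:
  assumes e: "is_effect \<infinity> e" and mem: "\<omega>0 \<in> Omega \<infinity>" "\<omega>1 \<in> Omega \<infinity>"
    and val: "e \<bullet> \<omega>0 = 1" "e \<bullet> \<omega>1 = 0"
  shows "(\<omega>0$1)\<^sup>2 + (\<omega>0$2)\<^sup>2 = 1" "\<omega>1$1 = - \<omega>0$1" "\<omega>1$2 = - \<omega>0$2"
proof -
  have e_at: "e \<bullet> v = e$1 * v$1 + e$2 * v$2 + e$3" if "v \<in> Omega \<infinity>" for v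
    using that by (simp add: inner_vec3 Omega_infinity)
  define \<rho> where "\<rho> = sqrt ((e$1)\<^sup>2 + (e$2)\<^sup>2)"
  have "\<rho> \<noteq> 0"
  proof
    assume "\<rho> = 0"
    then have "e$1 = 0" "e$2 = 0" by (simp_all add: \<rho>_def sum_power2_eq_zero_iff)
    then show False using val e_at[OF mem(1)] e_at[OF mem(2)] by simp
  qed
  moreover have "\<rho> \<ge> 0" by (simp add: \<rho>_def)
  ultimately have "\<rho> > 0" by simp
  define \<alpha> where "\<alpha> = e$1 / \<rho>"
  define \<beta> where "\<beta> = e$2 / \<rho>"
  have e12: "e$1 = \<rho> * \<alpha>" "e$2 = \<rho> * \<beta>" using \<open>\<rho> \<noteq> 0\<close> by (simp_all add: \<alpha>_def \<beta>_def)
  have "\<alpha>\<^sup>2 + \<beta>\<^sup>2 = ((e$1)\<^sup>2 + (e$2)\<^sup>2) / \<rho>\<^sup>2"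
    by (simp add: \<alpha>_def \<beta>_def power_divide add_divide_distrib)
  also have "\<dots> = 1" using \<open>\<rho> \<noteq> 0\<close> by (simp add: \<rho>_def)
  finally have "\<alpha>\<^sup>2 + \<beta>\<^sup>2 = 1" .
  then have "vector [\<alpha>, \<beta>, 1] \<in> Omega \<infinity>" "vector [- \<alpha>, - \<beta>, 1] \<in> Omega \<infinity>"
    by (simp_all add: Omega_infinity)
  then have "e \<bullet> vector [\<alpha>, \<beta>, 1] \<le> 1" "e \<bullet> vector [- \<alpha>, - \<beta>, 1] \<ge> 0"
    using e by (auto simp: is_effect_def)
  moreover have "e \<bullet> vector [\<alpha>, \<beta>, 1] = \<rho> * (\<alpha>\<^sup>2 + \<beta>\<^sup>2) + e$3"
    "e \<bullet> vector [- \<alpha>, - \<beta>, 1] = e$3 - \<rho> * (\<alpha>\<^sup>2 + \<beta>\<^sup>2)"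
    by (simp_all add: inner_vec3 e12 power2_eq_square algebra_simps)
  ultimately have "\<rho> + e$3 \<le> 1" "e$3 - \<rho> \<ge> 0"
    using \<open>\<alpha>\<^sup>2 + \<beta>\<^sup>2 = 1\<close> by simp_all
  have "\<rho> * (\<alpha> * \<omega>0$1 + \<beta> * \<omega>0$2) = 1 - e$3" "\<rho> * (- \<alpha> * \<omega>1$1 + - \<beta> * \<omega>1$2) = e$3"
    using val e_at[OF mem(1)] e_at[OF mem(2)] by (simp_all add: e12 algebra_simps)
  then have "\<rho> * (\<alpha> * \<omega>0$1 + \<beta> * \<omega>0$2) \<ge> \<rho> * 1" "\<rho> * (- \<alpha> * \<omega>1$1 + - \<beta> * \<omega>1$2) \<ge> \<rho> * 1"
    using \<open>\<rho> + e$3 \<le> 1\<close> \<open>e$3 - \<rho> \<ge> 0\<close> by simp_all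
  then have "\<alpha> * \<omega>0$1 + \<beta> * \<omega>0$2 \<ge> 1" "- \<alpha> * \<omega>1$1 + - \<beta> * \<omega>1$2 \<ge> 1"
    using \<open>\<rho> > 0\<close> by (simp_all only: mult_le_cancel_left_pos)
  moreover have "(- \<alpha>)\<^sup>2 + (- \<beta>)\<^sup>2 = 1" using \<open>\<alpha>\<^sup>2 + \<beta>\<^sup>2 = 1\<close> by simp
  moreover have "(\<omega>0$1)\<^sup>2 + (\<omega>0$2)\<^sup>2 \<le> 1" "(\<omega>1$1)\<^sup>2 + (\<omega>1$2)\<^sup>2 \<le> 1"
    using mem by (simp_all add: Omega_infinity)
  ultimately have "\<omega>0$1 = \<alpha>" "\<omega>0$2 = \<beta>" "\<omega>1$1 = - \<alpha>" "\<omega>1$2 = - \<beta>"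
    using unit_circle_eq_of_inner_ge_1[OF \<open>\<alpha>\<^sup>2 + \<beta>\<^sup>2 = 1\<close>, of "\<omega>0$1" "\<omega>0$2"]
      unit_circle_eq_of_inner_ge_1[of "- \<alpha>" "- \<beta>" "\<omega>1$1" "\<omega>1$2"] by simp_all
  then show "(\<omega>0$1)\<^sup>2 + (\<omega>0$2)\<^sup>2 = 1" "\<omega>1$1 = - \<omega>0$1" "\<omega>1$2 = - \<omega>0$2"
    using \<open>\<alpha>\<^sup>2 + \<beta>\<^sup>2 = 1\<close> by simp_all
qed

lemma disc_distinguishable_antipodal_pair:
  assumes mem: "\<forall>i<l. \<omega> i \<in> Omega \<infinity>" and pd: "perfectly_distinguishable \<infinity> l \<omega>" and "l \<ge> 2"
  shows "l = 2" "(\<omega> 0$1)\<^sup>2 + (\<omega> 0$2)\<^sup>2 = 1" "\<omega> 1$1 = - \<omega> 0$1" "\<omega> 1$2 = - \<omega> 0$2"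
proof -
  obtain e where e: "\<And>i. i < l \<Longrightarrow> is_effect \<infinity> (e i)"
    and val: "\<And>i j. i < l \<Longrightarrow> j < l \<Longrightarrow> e i \<bullet> \<omega> j = (if i = j then 1 else 0)"
    using pd unfolding perfectly_distinguishable_def by blast
  have antipode: "(\<omega> 0$1)\<^sup>2 + (\<omega> 0$2)\<^sup>2 = 1 \<and> \<omega> j$1 = - \<omega> 0$1 \<and> \<omega> j$2 = - \<omega> 0$2"
    if "0 < j" "j < l" for j
  proof -
    have "is_effect \<infinity> (e 0)" "\<omega> 0 \<in> Omega \<infinity>" "\<omega> j \<in> Omega \<infinity>"
      "e 0 \<bullet> \<omega> 0 = 1" "e 0 \<bullet> \<omega> j = 0"
      using e mem val that by auto
    then show ?thesis by (blast dest: disc_effect_antipodal)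
  qed
  from antipode[of 1] \<open>l \<ge> 2\<close>
  show "(\<omega> 0$1)\<^sup>2 + (\<omega> 0$2)\<^sup>2 = 1" "\<omega> 1$1 = - \<omega> 0$1" "\<omega> 1$2 = - \<omega> 0$2"
    by auto
  show "l = 2"
  proof (rule ccontr)
    assume "l \<noteq> 2"
    with \<open>l \<ge> 2\<close> have "2 < l" by simp
    then have "\<omega> 1 \<in> Omega \<infinity>" "\<omega> 2 \<in> Omega \<infinity>" using mem by auto
    then have "\<omega> 1$3 = 1" "\<omega> 2$3 = 1" by (simp_all add: Omega_nth_3)
    with antipode[of 1] antipode[of 2] \<open>2 < l\<close> have "\<omega> 2 = \<omega> 1"
      by (simp add: vec3_eq_iff)
    then show False using val[of 1 1] val[of 1 2] \<open>2 < l\<close> by simp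
  qed
qed

lemma disc_entropy_antipodal_mixture:
  assumes "(u$1)\<^sup>2 + (u$2)\<^sup>2 = 1" "v$1 = - u$1" "v$2 = - u$2" "0 \<le> a" "a \<le> 1"
  shows "disc_entropy (a *\<^sub>R u + (1 - a) *\<^sub>R v) = eta a + eta (1 - a)"
proof -
  define y where "y = a *\<^sub>R u + (1 - a) *\<^sub>R v"
  have "(y$1)\<^sup>2 + (y$2)\<^sup>2 = (2 * a - 1)\<^sup>2 * ((u$1)\<^sup>2 + (u$2)\<^sup>2)"
    using assms(2,3) by (simp add: y_def power2_eq_square algebra_simps)
  then have \<rho>: "sqrt ((y$1)\<^sup>2 + (y$2)\<^sup>2) = \<bar>2 * a - 1\<bar>" using assms(1) by simp
  show ?thesis
  proof (cases "a \<ge> 1 / 2")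
    case True
    then have "\<bar>2 * a - 1\<bar> = 2 * a - 1" by simp
    moreover have "(1 + (2 * a - 1)) / 2 = a" "(1 - (2 * a - 1)) / 2 = 1 - a" by simp_all
    ultimately show ?thesis
      unfolding y_def[symmetric] disc_entropy_def Let_def \<rho> by (simp only:)
  next
    case False
    then have "\<bar>2 * a - 1\<bar> = 1 - 2 * a" by simp
    moreover have "(1 + (1 - 2 * a)) / 2 = 1 - a" "(1 - (1 - 2 * a)) / 2 = a" by simp_all
    ultimately show ?thesis
      unfolding y_def[symmetric] disc_entropy_def Let_def \<rho> by (simp only: add.commute)
  qed
qed

lemma entropy_like_disc_entropy: "entropy_like \<infinity> disc_entropy"
  unfolding entropy_like_def
proof (intro conjI ballI allI impI)
  show "disc_entropy \<sigma> = 0" if "\<sigma> \<in> pure_states \<infinity>" for \<sigma>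
    using that pure_states_infinity_unit_circle disc_entropy_unit_circle by blast
next
  fix l and \<omega> :: "nat \<Rightarrow> real^3" and p :: "nat \<Rightarrow> real"
  assume "(\<forall>i<l. \<omega> i \<in> Omega \<infinity>) \<and> perfectly_distinguishable \<infinity> l \<omega> \<and> (\<forall>i<l. 0 \<le> p i) \<and> sum p {..<l} = 1"
  then have mem: "\<forall>i<l. \<omega> i \<in> Omega \<infinity>" and pd: "perfectly_distinguishable \<infinity> l \<omega>"
    and p: "\<forall>i<l. 0 \<le> p i" "sum p {..<l} = 1" by auto
  show "disc_entropy (\<Sum>i<l. p i *\<^sub>R \<omega> i) = (\<Sum>i<l. p i * disc_entropy (\<omega> i)) - (\<Sum>i<l. plogp (p i))"
  proof (cases "l \<ge> 2")
    case True
    note pair = disc_distinguishable_antipodal_pair[OF mem pd True]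
    have "p 1 = 1 - p 0" "0 \<le> p 0" "p 0 \<le> 1" using p pair(1) by (auto simp: numeral_2_eq_2)
    moreover have "disc_entropy (\<omega> 0) = 0" "disc_entropy (\<omega> 1) = 0"
      using pair by (simp_all add: disc_entropy_unit_circle)
    ultimately show ?thesis
      using disc_entropy_antipodal_mixture[OF pair(2-4), of "p 0"] pair(1)
      by (simp add: numeral_2_eq_2 eta_def)
  next
    case False
    then have "l = 1" using p(2) by (cases l) auto
    then show ?thesis using p(2) by (simp add: plogp_def)
  qed
qed

section \<open>The triangle\<close>

lemma polygon_vertex_3:
  "polygon_vertex 3 0 = vector [sqrt 2, 0, 1]"
  "polygon_vertex 3 1 = vector [- sqrt 2 / 2, sqrt 6 / 2, 1]"
  "polygon_vertex 3 2 = vector [- sqrt 2 / 2, - sqrt 6 / 2, 1]"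
proof -
  have r: "polygon_radius 3 = sqrt 2" by (simp add: polygon_radius_def cos_60)
  have "2 * pi * real (0::nat) / real (3::nat) = 0" "2 * pi * real (1::nat) / real (3::nat) = pi - pi / 3"
    "2 * pi * real (2::nat) / real (3::nat) = pi / 3 + pi" by simp_all
  note polar = polygon_vertex_eq_polar[OF this(1)] polygon_vertex_eq_polar[OF this(2)]
    polygon_vertex_eq_polar[OF this(3)]
  have trig: "cos (pi - pi / 3) = - 1 / 2" "sin (pi - pi / 3) = sqrt 3 / 2"
    "cos (pi / 3 + pi) = - 1 / 2" "sin (pi / 3 + pi) = - sqrt 3 / 2"
    unfolding cos_pi_minus sin_pi_minus cos_periodic_pi sin_periodic_pi cos_60 sin_60 by simp_all
  have "sqrt 2 * (sqrt 3 / 2) = sqrt 6 / 2" by (simp flip: real_sqrt_mult)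
  then show "polygon_vertex 3 0 = vector [sqrt 2, 0, 1]"
    "polygon_vertex 3 1 = vector [- sqrt 2 / 2, sqrt 6 / 2, 1]"
    "polygon_vertex 3 2 = vector [- sqrt 2 / 2, - sqrt 6 / 2, 1]"
    unfolding polar trig r by simp_all
qed

lemma less_3_cases_iff: "k < (3::nat) \<longleftrightarrow> k = 0 \<or> k = 1 \<or> k = 2"
  by auto

lemma sum_lessThan_3: "(\<Sum>k<3. f k) = f 0 + f 1 + f (2::nat)"
  by (simp add: numeral_3_eq_3 numeral_2_eq_2)

lemma inner_polygon_vertex_3:
  assumes "k < 3" "j < 3"
  shows "polygon_vertex 3 k \<bullet> polygon_vertex 3 j = (if k = j then 3 else 0)"
proof -
  have "sqrt 2 * sqrt 2 = (2::real)" "sqrt 6 * sqrt 6 = (6::real)" by simp_all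
  then show ?thesis
    using assms unfolding less_3_cases_iff
    by (elim disjE; simp only: polygon_vertex_3; simp add: inner_vec3 field_simps)
qed

lemma sum_inner_polygon_vertex_3: "(\<Sum>k<3. polygon_vertex 3 k \<bullet> v) = 3 * v$3"
  unfolding sum_lessThan_3 polygon_vertex_3 by (simp add: inner_vec3 field_simps)

lemma polygon_vertex_3_expansion: "3 *\<^sub>R v = (\<Sum>k<3. (polygon_vertex 3 k \<bullet> v) *\<^sub>R polygon_vertex 3 k)"
proof -
  have "sqrt 2 * sqrt 2 = (2::real)" "sqrt 6 * sqrt 6 = (6::real)" by simp_all
  then show ?thesis
    unfolding sum_lessThan_3 polygon_vertex_3 by (simp add: vec3_eq_iff inner_vec3 field_simps)
qed

lemma Omega_3: "Omega (enat 3) = convex hull (polygon_vertex 3 ` {..<3})"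
proof -
  have "{polygon_vertex 3 i | i. i < 3} = polygon_vertex 3 ` {..<3}" by auto
  then show ?thesis by (simp add: Omega_enat)
qed

lemma inner_polygon_vertex_3_nonneg:
  assumes "v \<in> Omega (enat 3)" "k < 3"
  shows "0 \<le> polygon_vertex 3 k \<bullet> v"
proof -
  have "convex hull (polygon_vertex 3 ` {..<3}) \<subseteq> {x. polygon_vertex 3 k \<bullet> x \<ge> 0}"
    using assms(2) by (intro hull_minimal) (auto simp: inner_polygon_vertex_3 convex_halfspace_ge)
  then show ?thesis using assms(1) unfolding Omega_3 by auto
qed

text \<open>The vertices of the triangle are orthogonal with squared norm \<open>3\<close>, so
  \<open>polygon_vertex 3 k \<bullet> v / 3\<close> is the \<open>k\<close>-th barycentric coordinate of \<open>v\<close>.\<close>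

definition triangle_entropy :: "real^3 \<Rightarrow> real" where
  "triangle_entropy v = (\<Sum>k<3. eta (polygon_vertex 3 k \<bullet> v / 3))"

lemma triangle_entropy_pure:
  assumes "\<sigma> \<in> pure_states (enat 3)"
  shows "triangle_entropy \<sigma> = 0"
proof -
  have "\<sigma> extreme_point_of convex hull (polygon_vertex 3 ` {..<3})"
    using assms by (simp add: pure_states_def Omega_3)
  then obtain j where "j < 3" "\<sigma> = polygon_vertex 3 j"
    using extreme_point_of_convex_hull by blast
  then show ?thesis
    by (simp add: triangle_entropy_def inner_commute inner_polygon_vertex_3 sum_lessThan_3 less_3_cases_iff)
qed

text \<open>If the \<open>k\<close>-th coordinate of two of the states were positive, every effect \<open>e i\<close> would
  vanish at the \<open>k\<close>-th vertex, contradicting \<open>\<Sum>i. e i = u\<close>.\<close>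

lemma triangle_distinguishable_disjoint_support:
  assumes mem: "\<forall>i<l. \<omega> i \<in> Omega (enat 3)" and pd: "perfectly_distinguishable (enat 3) l \<omega>"
    and "k < 3" "i < l" "j < l" "i \<noteq> j"
  shows "polygon_vertex 3 k \<bullet> \<omega> i = 0 \<or> polygon_vertex 3 k \<bullet> \<omega> j = 0"
proof (rule ccontr)
  let ?w = "polygon_vertex 3"
  assume "\<not> (?w k \<bullet> \<omega> i = 0 \<or> ?w k \<bullet> \<omega> j = 0)"
  then have pos: "?w k \<bullet> \<omega> i > 0" "?w k \<bullet> \<omega> j > 0"
    using inner_polygon_vertex_3_nonneg mem assms by (auto simp: order_less_le)
  obtain e where e: "\<And>i. i < l \<Longrightarrow> is_effect (enat 3) (e i)"
    and sum_e: "(\<Sum>i<l. e i) = unit_effect (enat 3)"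
    and val: "\<And>i j. i < l \<Longrightarrow> j < l \<Longrightarrow> e i \<bullet> \<omega> j = (if i = j then 1 else 0)"
    using pd unfolding perfectly_distinguishable_def by blast
  have vanish: "e i' \<bullet> ?w k = 0" if "i' < l" "i0 < l" "i' \<noteq> i0" "?w k \<bullet> \<omega> i0 > 0" for i' i0
  proof -
    have "3 * (e i' \<bullet> \<omega> i0) = (\<Sum>k'<3. (?w k' \<bullet> \<omega> i0) * (e i' \<bullet> ?w k'))"
      using arg_cong[OF polygon_vertex_3_expansion[of "\<omega> i0"], of "inner (e i')"]
      by (simp add: inner_sum_right)
    then have "(\<Sum>k'<3. (?w k' \<bullet> \<omega> i0) * (e i' \<bullet> ?w k')) = 0" using val that by simp
    moreover have "0 \<le> (?w k' \<bullet> \<omega> i0) * (e i' \<bullet> ?w k')" if "k' < 3" for k'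
      using that \<open>i' < l\<close> \<open>i0 < l\<close> e[of i'] mem inner_polygon_vertex_3_nonneg polygon_vertex_in_Omega
      by (simp add: is_effect_def)
    ultimately have "\<forall>k'\<in>{..<3}. (?w k' \<bullet> \<omega> i0) * (e i' \<bullet> ?w k') = 0"
      by (subst (asm) sum_nonneg_eq_0_iff) auto
    then have "(?w k \<bullet> \<omega> i0) * (e i' \<bullet> ?w k) = 0" using \<open>k < 3\<close> by blast
    then show ?thesis using that by simp
  qed
  have "e i' \<bullet> ?w k = 0" if "i' < l" for i'
    using vanish[of i' i] vanish[of i' j] that assms pos by (cases "i' = i") auto
  then have "(\<Sum>i<l. e i) \<bullet> ?w k = 0" by (simp add: inner_sum_left)
  moreover have "(\<Sum>i<l. e i) \<bullet> ?w k = 1"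
    using \<open>k < 3\<close> by (simp add: sum_e unit_effect_enat inner_axis3 polygon_vertex_nth)
  ultimately show False by simp
qed

lemma sum_disjoint_support_comp:
  assumes "g 0 = 0" "finite I"
    and "\<And>i j. i \<in> I \<Longrightarrow> j \<in> I \<Longrightarrow> i \<noteq> j \<Longrightarrow> f i = 0 \<or> f j = 0"
  shows "g (\<Sum>i\<in>I. f i) = (\<Sum>i\<in>I. g (f i))"
proof (cases "\<exists>i0\<in>I. f i0 \<noteq> 0")
  case True
  then obtain i0 where "i0 \<in> I" "f i0 \<noteq> 0" by blast
  with assms(3) have "f i = 0" if "i \<in> I - {i0}" for i using that by blast
  then have "(\<Sum>i\<in>I. f i) = f i0" "(\<Sum>i\<in>I. g (f i)) = g (f i0)"
    using \<open>i0 \<in> I\<close> assms(1,2) by (simp_all add: sum.remove)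
  then show ?thesis by simp
qed (use assms(1) in simp)

lemma entropy_like_triangle_entropy: "entropy_like (enat 3) triangle_entropy"
  unfolding entropy_like_def
proof (intro conjI ballI allI impI)
  show "triangle_entropy \<sigma> = 0" if "\<sigma> \<in> pure_states (enat 3)" for \<sigma>
    using that by (rule triangle_entropy_pure)
next
  fix l and \<omega> :: "nat \<Rightarrow> real^3" and p :: "nat \<Rightarrow> real"
  assume "(\<forall>i<l. \<omega> i \<in> Omega (enat 3)) \<and> perfectly_distinguishable (enat 3) l \<omega>
    \<and> (\<forall>i<l. 0 \<le> p i) \<and> sum p {..<l} = 1"
  then have mem: "\<forall>i<l. \<omega> i \<in> Omega (enat 3)" and pd: "perfectly_distinguishable (enat 3) l \<omega>"
    and p: "\<And>i. i < l \<Longrightarrow> 0 \<le> p i" by auto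
  define c where "c k i = polygon_vertex 3 k \<bullet> \<omega> i / 3" for k i
  have c_nonneg: "0 \<le> c k i" if "k < 3" "i < l" for k i
    using that mem inner_polygon_vertex_3_nonneg by (simp add: c_def)
  have c_sum: "(\<Sum>k<3. c k i) = 1" if "i < l" for i
  proof -
    have "\<omega> i $ 3 = 1" using that mem Omega_nth_3 by blast
    then show ?thesis
      using sum_inner_polygon_vertex_3[of "\<omega> i"] by (simp add: c_def flip: sum_divide_distrib)
  qed
  have "eta (\<Sum>i<l. p i * c k i) = (\<Sum>i<l. eta (p i * c k i))" if "k < 3" for k
    using triangle_distinguishable_disjoint_support[OF mem pd that]
    by (intro sum_disjoint_support_comp) (auto simp: c_def)
  then have "triangle_entropy (\<Sum>i<l. p i *\<^sub>R \<omega> i) = (\<Sum>k<3. \<Sum>i<l. eta (p i * c k i))"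
    by (simp add: triangle_entropy_def inner_sum_right c_def sum_divide_distrib)
  also have "\<dots> = (\<Sum>k<3. \<Sum>i<l. p i * eta (c k i) + c k i * eta (p i))"
    using p c_nonneg by (intro sum.cong refl) (simp add: eta_mult)
  also have "\<dots> = (\<Sum>i<l. p i * triangle_entropy (\<omega> i) + eta (p i) * (\<Sum>k<3. c k i))"
    by (subst sum.swap) (simp add: sum.distrib sum_distrib_left sum_distrib_right
        triangle_entropy_def c_def algebra_simps)
  also have "\<dots> = (\<Sum>i<l. p i * triangle_entropy (\<omega> i)) - (\<Sum>i<l. plogp (p i))"
    by (simp add: c_sum eta_def sum_subtractf)
  finally show "triangle_entropy (\<Sum>i<l. p i *\<^sub>R \<omega> i)
    = (\<Sum>i<l. p i * triangle_entropy (\<omega> i)) - (\<Sum>i<l. plogp (p i))" .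
qed

theorem mainTheorem7:
  fixes n :: enat
  assumes "n \<ge> 3"
  shows "(\<exists>S :: real^3 \<Rightarrow> real. entropy_like n S) \<longleftrightarrow> (n = 3 \<or> n = \<infinity>)"
proof (cases n)
  case (enat m)
  with assms have "m \<ge> 3" by (simp add: numeral_eq_enat)
  show ?thesis
  proof (cases "m = 3")
    case True
    with enat entropy_like_triangle_entropy show ?thesis by (auto simp: numeral_eq_enat)
  next
    case False
    with \<open>m \<ge> 3\<close> have "m \<ge> 4" by simp
    with enat False not_entropy_like_polygon show ?thesis by (auto simp: numeral_eq_enat)
  qed
next
  case infinity
  with entropy_like_disc_entropy show ?thesis by auto
qed

end
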